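(* Let $\nu>0$. For every $x\ge0$ and $t>0$, $$P^{(-\nu)}_x(\tau_0>t)=\frac{x^{2\nu}}{(2t)^{\nu}\Gamma(\nu+1)}\exp\Big(-\frac{x^2}{2t}\Big)+P^{(-\nu-1)}_x(\tau_0>t).$$
   Context: For $\mu\in\mathbb{R}$ and $x\ge0$, $P^{(\mu)}_x$ denotes the law on $\Omega=C([0,\infty);\mathbb{R})$ of the Bessel process with index $\mu$ (dimension $2(\mu+1)$) started at $x$; $R$ is the coordinate process on $\Omega$, and $\tau_0=\inf\{t\ge0:R_t=0\}$. $\Gamma$ is the gamma function. *)

theory Defs
  imports "HOL-Probability.Probability"
begin

text \<open>Path space Omega = C([0,oo); R), realised as functions real => real that are
  continuous on [0,oo) and normalised to 0 at negative times, with the sigma-algebra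
  generated by the coordinate maps.\<close>

definition cont_paths :: "(real \<Rightarrow> real) set" where
  "cont_paths = {\<omega>. continuous_on {0..} \<omega> \<and> (\<forall>s<0. \<omega> s = 0)}"

definition path_space :: "(real \<Rightarrow> real) measure" where
  "path_space = restrict_space (Pi\<^sub>M UNIV (\<lambda>_. borel)) cont_paths"

text \<open>First hitting time of 0 (value oo if 0 is never hit).\<close>

definition tau0 :: "(real \<Rightarrow> real) \<Rightarrow> ereal" where
  "tau0 \<omega> = Inf {ereal s | s. 0 \<le> s \<and> \<omega> s = 0}"

definition besselI :: "real \<Rightarrow> real \<Rightarrow> real" where
  "besselI a z = (\<Sum>k. (z / 2) powr (2 * real k + a) / (fact k * Gamma (real k + a + 1)))"

text \<open>Transition density of the Bessel process of index mu killed at its first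
  hitting time of 0 (for mu >= 0 this is the ordinary Bessel transition density):
  q_t(x,y) = (y/t) (y/x)^mu exp(-(x^2+y^2)/(2t)) I_{|mu|}(xy/t),  x, y > 0.\<close>

definition bessel_kdens :: "real \<Rightarrow> real \<Rightarrow> real \<Rightarrow> real \<Rightarrow> real" where
  "bessel_kdens \<mu> t x y =
     (y / t) * (y / x) powr \<mu> * exp (- (x\<^sup>2 + y\<^sup>2) / (2 * t)) * besselI \<bar>\<mu>\<bar> (x * y / t)"

text \<open>Finite-dimensional distributions of the killed process:
  kfdd mu s y [(t1,A1),...,(tn,An)] = P_y-at-time-s(R_{t_i} in A_i for all i, t_n < tau_0).\<close>

fun bessel_kfdd :: "real \<Rightarrow> real \<Rightarrow> real \<Rightarrow> (real \<times> real set) list \<Rightarrow> ennreal" where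
  "bessel_kfdd \<mu> s y [] = 1"
| "bessel_kfdd \<mu> s y ((t, A) # rest) =
     (\<integral>\<^sup>+ z. indicator (A \<inter> {0<..}) z * ennreal (bessel_kdens \<mu> (t - s) y z)
              * bessel_kfdd \<mu> t z rest \<partial>lborel)"

text \<open>P is (a version of) the law P^(mu)_x of the Bessel process of index mu started at x:
  a probability measure on path space, starting at x, whose law before tau_0 has the
  Bessel transition densities.\<close>

definition bessel_law :: "real \<Rightarrow> real \<Rightarrow> (real \<Rightarrow> real) measure \<Rightarrow> bool" where
  "bessel_law \<mu> x P \<longleftrightarrow>
     prob_space P \<and> sets P = sets path_space \<and> space P = space path_space \<and>
     (AE \<omega> in P. \<omega> 0 = x) \<and>
     (\<forall>tas. tas \<noteq> [] \<longrightarrow> sorted_wrt (<) (map fst tas) \<longrightarrow> 0 < fst (hd tas) \<longrightarrow>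
        (\<forall>(s, A) \<in> set tas. A \<in> sets borel) \<longrightarrow>
        emeasure P {\<omega> \<in> space P. (\<forall>(s, A) \<in> set tas. \<omega> s \<in> A) \<and>
                                  ereal (fst (last tas)) < tau0 \<omega>}
          = bessel_kfdd \<mu> 0 x tas)"

end

theory Submission
  imports Defs
begin

text \<open>For index -b with b > 0, expanding I_b in its power series writes the killed transition
  density as q_t(x,z) = \<Sum>_k c_k(b) \<chi>_k(z), where each \<chi>_k is a probability density on
  (0,\<infinity>) and c_k(b) = exp(-x^2/2t) x^(2k+2b) / ((2t)^(k+b) \<Gamma>(k+b+1)). Integrating in z gives
  P^(-b)_x(\<tau>_0 > t) = \<Sum>_k c_k(b), and since c_(k+1)(b) = c_k(b+1), the survival probability
  for index -b is its term c_0(b) plus the survival probability for index -b-1.\<close>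

lemma nn_integral_odd_gaussian_moment:
  fixes s :: real
  assumes "s > 0"
  shows "(\<integral>\<^sup>+ y. ennreal (indicator {0<..} y * (y ^ (2 * k + 1) * exp (- y\<^sup>2 / s))) \<partial>lborel)
       = ennreal (s ^ (k + 1) * fact k / 2)"
proof -
  define c where "c = sqrt s"
  have c: "c > 0" and c2: "c\<^sup>2 = s"
    using assms by (simp_all add: c_def)
  have standard: "(\<integral>\<^sup>+ x. ennreal (indicator {0<..} x * (exp (- x\<^sup>2) * x ^ (2 * k + 1))) \<partial>lborel)
      = ennreal (fact k / 2)"
  proof -
    have "has_bochner_integral lborel
        (\<lambda>x::real. indicator {0..} x *\<^sub>R (exp (- x\<^sup>2) * x ^ (2 * k + 1))) (fact k / 2)"
      by (rule gaussian_moment_odd_pos)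
    moreover have "(\<lambda>x::real. indicator {0..} x *\<^sub>R (exp (- x\<^sup>2) * x ^ (2 * k + 1)))
        = (\<lambda>x. indicator {0<..} x * (exp (- x\<^sup>2) * x ^ (2 * k + 1)))"
      by (auto simp: indicator_def fun_eq_iff)
    ultimately show ?thesis
      by (subst nn_integral_eq_integrable) (auto simp: has_bochner_integral_iff indicator_def)
  qed
  have scale: "indicator {0<..} (c * x) * ((c * x) ^ (2 * k + 1) * exp (- (c * x)\<^sup>2 / s))
      = s ^ k * c * (indicator {0<..} x * (exp (- x\<^sup>2) * x ^ (2 * k + 1)))" for x
  proof -
    have "(c * x) ^ (2 * k + 1) = s ^ k * c * x ^ (2 * k + 1)"
      by (simp add: power_mult_distrib power_add power_mult c2)
    moreover have "- (c * x)\<^sup>2 / s = - x\<^sup>2"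
      using assms by (simp add: power_mult_distrib c2)
    moreover have "indicator {0<..} (c * x) = (indicator {0<..} x :: real)"
      using c by (simp add: indicator_def zero_less_mult_iff)
    ultimately show ?thesis
      by simp
  qed
  have "(\<integral>\<^sup>+ y. ennreal (indicator {0<..} y * (y ^ (2 * k + 1) * exp (- y\<^sup>2 / s))) \<partial>lborel)
      = \<bar>c\<bar> * (\<integral>\<^sup>+ x. ennreal (indicator {0<..} (0 + c * x)
            * ((0 + c * x) ^ (2 * k + 1) * exp (- (0 + c * x)\<^sup>2 / s))) \<partial>lborel)"
    by (rule nn_integral_real_affine) (use c in auto)
  also have "\<dots> = \<bar>c\<bar> * (\<integral>\<^sup>+ x. ennreal (s ^ k * c)
            * ennreal (indicator {0<..} x * (exp (- x\<^sup>2) * x ^ (2 * k + 1))) \<partial>lborel)"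
    using c assms
    by (simp only: add_0 scale ennreal_mult'[symmetric] mult_nonneg_nonneg zero_le_power less_imp_le)
  also have "\<dots> = ennreal c * (ennreal (s ^ k * c) * ennreal (fact k / 2))"
    using c by (subst nn_integral_cmult, measurable) (simp only: standard abs_of_pos)
  also have "\<dots> = ennreal (c * (s ^ k * c * (fact k / 2)))"
    using c assms by (subst (1 2) ennreal_mult') auto
  also have "c * (s ^ k * c * (fact k / 2)) = s ^ (k + 1) * fact k / 2"
    using c2 by (simp add: power2_eq_square algebra_simps)
  finally show ?thesis .
qed

text \<open>Density of the law at time t of the (2k+2)-dimensional Bessel process started at 0.\<close>

definition chi_density :: "real \<Rightarrow> nat \<Rightarrow> real \<Rightarrow> real" where
  "chi_density t k z = 2 * z ^ (2 * k + 1) * exp (- z\<^sup>2 / (2 * t)) / ((2 * t) ^ (k + 1) * fact k)"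

lemma nn_integral_chi_density:
  assumes "t > 0"
  shows "(\<integral>\<^sup>+ z. indicator {0<..} z * ennreal (chi_density t k z) \<partial>lborel) = 1"
proof -
  let ?N = "2 / ((2 * t) ^ (k + 1) * fact k)"
  have N: "?N > 0" using assms by simp
  have "(\<integral>\<^sup>+ z. indicator {0<..} z * ennreal (chi_density t k z) \<partial>lborel)
      = (\<integral>\<^sup>+ z. ennreal ?N * ennreal (indicator {0<..} z * (z ^ (2 * k + 1) * exp (- z\<^sup>2 / (2 * t)))) \<partial>lborel)"
    using N by (intro nn_integral_cong) (auto simp: chi_density_def indicator_def ennreal_mult'[symmetric])
  also have "\<dots> = ennreal ?N * ennreal ((2 * t) ^ (k + 1) * fact k / 2)"
    using assms
    by (subst nn_integral_cmult, measurable)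
      (simp only: nn_integral_odd_gaussian_moment mult_pos_pos zero_less_numeral)
  also have "\<dots> = 1"
    using N assms by (simp add: ennreal_mult'[symmetric])
  finally show ?thesis .
qed

lemma Gamma_le_Gamma_add_nat:
  fixes b :: real
  assumes "b > 0"
  shows "Gamma (b + 1) \<le> Gamma (real k + b + 1)"
proof -
  have Gamma_pos: "Gamma (b + 1) > 0"
    using assms by (intro Gamma_real_pos) simp
  have "b + 1 \<notin> \<int>\<^sub>\<le>\<^sub>0"
    using assms nonpos_Ints_nonpos[of "b + 1"] by force
  then have Gamma_shift: "Gamma (real k + b + 1) = pochhammer (b + 1) k * Gamma (b + 1)"
    using pochhammer_Gamma[of "b + 1" k] Gamma_pos by (simp add: add_ac)
  have "pochhammer (b + 1) k \<ge> (1::real)"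
  proof (induction k)
    case (Suc k)
    have "(1::real) * 1 \<le> pochhammer (b + 1) k * (b + 1 + real k)"
      by (rule mult_mono) (use Suc assms in auto)
    then show ?case by (simp add: pochhammer_Suc)
  qed simp
  then show ?thesis
    unfolding Gamma_shift using Gamma_pos by simp
qed

lemma summable_besselI_series:
  fixes b w :: real
  assumes b: "b > 0" and w: "w \<ge> 0"
  shows "summable (\<lambda>k. w powr (2 * real k + b) / (fact k * Gamma (real k + b + 1)))"
proof (rule summable_comparison_test)
  let ?g = "\<lambda>k. w powr b / Gamma (b + 1) * (inverse (fact k) * (w\<^sup>2) ^ k)"
  show "summable ?g"
    by (intro summable_mult summable_exp)
  have "norm (w powr (2 * real k + b) / (fact k * Gamma (real k + b + 1))) \<le> ?g k" for k
  proof -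
    have w_powr: "w powr (2 * real k + b) = w powr b * (w\<^sup>2) ^ k"
    proof (cases "w = 0")
      case False
      then have "w powr (2 * real k) = (w\<^sup>2) ^ k"
        using w powr_realpow[of w "2 * k"] by (simp add: power_mult)
      then show ?thesis
        by (simp add: powr_add)
    qed (use b in simp)
    have "Gamma (b + 1) > 0"
      using b by (intro Gamma_real_pos) simp
    moreover have "0 \<le> w powr b * (w\<^sup>2) ^ k / fact k"
      using w by simp
    ultimately have "w powr b * (w\<^sup>2) ^ k / fact k / Gamma (real k + b + 1)
        \<le> w powr b * (w\<^sup>2) ^ k / fact k / Gamma (b + 1)"
      using Gamma_le_Gamma_add_nat[OF b, of k] by (intro divide_left_mono) auto
    moreover have "Gamma (real k + b + 1) > 0"
      using b by (intro Gamma_real_pos) simp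
    ultimately show ?thesis
      unfolding w_powr using w by (simp add: field_simps)
  qed
  then show "\<exists>N. \<forall>k\<ge>N. norm (w powr (2 * real k + b) / (fact k * Gamma (real k + b + 1))) \<le> ?g k"
    by blast
qed

definition survival_coeff :: "real \<Rightarrow> real \<Rightarrow> real \<Rightarrow> nat \<Rightarrow> real" where
  "survival_coeff b t x k =
     exp (- x\<^sup>2 / (2 * t)) * x powr (2 * real k + 2 * b) / ((2 * t) powr (real k + b) * Gamma (real k + b + 1))"

lemma survival_coeff_nonneg:
  "b > 0 \<Longrightarrow> survival_coeff b t x k \<ge> 0"
  unfolding survival_coeff_def by (simp add: Gamma_real_pos)

lemma survival_coeff_Suc: "survival_coeff b t x (Suc k) = survival_coeff (b + 1) t x k"
  unfolding survival_coeff_def by (simp add: algebra_simps)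

lemma bessel_kdens_neg_series_term:
  fixes b t x z :: real
  assumes "t > 0" and "x > 0" and "z > 0"
  shows "(z / t) * (z / x) powr (- b) * exp (- (x\<^sup>2 + z\<^sup>2) / (2 * t))
           * ((x * z / t / 2) powr (2 * real k + b) / (fact k * Gamma (real k + b + 1)))
         = survival_coeff b t x k * chi_density t k z"
proof -
  let ?D = "fact k * Gamma (real k + b + 1)"
  have xz: "(x * z / t / 2) powr (2 * real k + b)
      = x powr (2 * real k + b) * z powr (2 * real k + b) / (2 * t) powr (2 * real k + b)"
    using assms by (simp add: powr_mult powr_divide mult.commute[of t] divide_divide_eq_left)
  have zx: "(z / x) powr (- b) = x powr b / z powr b"
    using assms by (simp add: powr_divide powr_minus_divide)
  have ex: "exp (- (x\<^sup>2 + z\<^sup>2) / (2 * t)) = exp (- x\<^sup>2 / (2 * t)) * exp (- z\<^sup>2 / (2 * t))"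
    by (simp add: exp_add[symmetric] diff_divide_distrib)
  have zpow: "z * z powr (2 * real k + b) / z powr b = z ^ (2 * k + 1)"
    using assms by (simp add: powr_add powr_realpow[symmetric])
  have xpow: "x powr b * x powr (2 * real k + b) = x powr (2 * real k + 2 * b)"
    by (simp add: powr_add[symmetric] algebra_simps)
  have tpow: "t * (2 * t) powr (2 * real k + b) = (2 * t) powr (real k + b) * (2 * t) ^ (k + 1) / 2"
  proof -
    have "(2 * t) powr (2 * real k + b) = (2 * t) powr (real k + b) * (2 * t) powr real k"
      by (simp only: powr_add[symmetric]) (simp add: algebra_simps)
    also have "(2 * t) powr real k = (2 * t) ^ k"
      using assms by (simp only: powr_realpow mult_pos_pos zero_less_numeral)
    finally show ?thesis by simp
  qed
  have "(z / t) * (z / x) powr (- b) * exp (- (x\<^sup>2 + z\<^sup>2) / (2 * t))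
           * ((x * z / t / 2) powr (2 * real k + b) / ?D)
        = (x powr b * x powr (2 * real k + b)) * (z * z powr (2 * real k + b) / z powr b)
           * exp (- x\<^sup>2 / (2 * t)) * exp (- z\<^sup>2 / (2 * t)) / (t * (2 * t) powr (2 * real k + b) * ?D)"
    unfolding xz zx ex by (simp add: field_simps)
  also have "\<dots> = x powr (2 * real k + 2 * b) * z ^ (2 * k + 1) * exp (- x\<^sup>2 / (2 * t))
           * exp (- z\<^sup>2 / (2 * t)) / ((2 * t) powr (real k + b) * (2 * t) ^ (k + 1) / 2 * ?D)"
    unfolding xpow zpow tpow by (simp add: mult.assoc)
  also have "\<dots> = survival_coeff b t x k * chi_density t k z"
    unfolding survival_coeff_def chi_density_def by (simp add: field_simps)
  finally show ?thesis .
qed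

lemma bessel_kdens_neg_sums:
  fixes b t x z :: real
  assumes b: "b > 0" and "t > 0" and "x > 0" and "z > 0"
  shows "(\<lambda>k. survival_coeff b t x k * chi_density t k z) sums bessel_kdens (- b) t x z"
proof -
  let ?T = "\<lambda>k. (x * z / t / 2) powr (2 * real k + b) / (fact k * Gamma (real k + b + 1))"
  have "summable ?T"
    using assms by (intro summable_besselI_series) auto
  then have "(\<lambda>k. (z / t) * (z / x) powr (- b) * exp (- (x\<^sup>2 + z\<^sup>2) / (2 * t)) * ?T k)
      sums ((z / t) * (z / x) powr (- b) * exp (- (x\<^sup>2 + z\<^sup>2) / (2 * t)) * suminf ?T)"
    by (intro sums_mult summable_sums)
  then show ?thesis
    using assms unfolding bessel_kdens_neg_series_term[OF assms(2-4)]
    by (simp add: bessel_kdens_def besselI_def)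
qed

lemma nn_integral_bessel_kdens_neg:
  fixes b t x :: real
  assumes b: "b > 0" and t: "t > 0" and x: "x \<ge> 0"
  shows "(\<integral>\<^sup>+ z. indicator {0<..} z * ennreal (bessel_kdens (- b) t x z) \<partial>lborel)
       = (\<Sum>k. ennreal (survival_coeff b t x k))"
proof (cases "x = 0")
  case True
  \<comment> \<open>both sides vanish, as z / 0 = 0 and 0 powr a = 0\<close>
  then show ?thesis
    by (simp add: bessel_kdens_def survival_coeff_def)
next
  case False
  with x have x: "x > 0" by simp
  have "(\<integral>\<^sup>+ z. indicator {0<..} z * ennreal (bessel_kdens (- b) t x z) \<partial>lborel)
      = (\<integral>\<^sup>+ z. (\<Sum>k. ennreal (survival_coeff b t x k)
            * (indicator {0<..} z * ennreal (chi_density t k z))) \<partial>lborel)"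
  proof (intro nn_integral_cong)
    fix z :: real
    have "ennreal (bessel_kdens (- b) t x z)
        = (\<Sum>k. ennreal (survival_coeff b t x k) * ennreal (chi_density t k z))" if "z > 0"
    proof -
      have nonneg: "0 \<le> survival_coeff b t x k * chi_density t k z" for k
        using survival_coeff_nonneg[OF b] that t by (simp add: chi_density_def)
      have "(\<lambda>k. survival_coeff b t x k * chi_density t k z) sums bessel_kdens (- b) t x z"
        by (rule bessel_kdens_neg_sums[OF b t x that])
      then show ?thesis
        using nonneg survival_coeff_nonneg[OF b]
        by (simp add: sums_iff suminf_ennreal2 ennreal_mult'[symmetric])
    qed
    then show "indicator {0<..} z * ennreal (bessel_kdens (- b) t x z)
        = (\<Sum>k. ennreal (survival_coeff b t x k)
            * (indicator {0<..} z * ennreal (chi_density t k z)))"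
      by (simp add: indicator_def)
  qed
  also have "\<dots> = (\<Sum>k. ennreal (survival_coeff b t x k)
            * (\<integral>\<^sup>+ z. indicator {0<..} z * ennreal (chi_density t k z) \<partial>lborel))"
    by (subst nn_integral_suminf) (simp_all add: nn_integral_cmult chi_density_def)
  also have "\<dots> = (\<Sum>k. ennreal (survival_coeff b t x k))"
    by (simp add: nn_integral_chi_density t)
  finally show ?thesis .
qed

lemma emeasure_tau0_gt_bessel_law:
  assumes "bessel_law \<mu> x P" and "t > 0"
  shows "emeasure P {\<omega> \<in> space P. tau0 \<omega> > ereal t}
       = (\<integral>\<^sup>+ z. indicator {0<..} z * ennreal (bessel_kdens \<mu> t x z) \<partial>lborel)"
proof -
  have "emeasure P {\<omega> \<in> space P. (\<forall>(s, A) \<in> set [(t, UNIV)]. \<omega> s \<in> A)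
          \<and> ereal (fst (last [(t, UNIV)])) < tau0 \<omega>}
      = bessel_kfdd \<mu> 0 x [(t, UNIV)]"
    using assms unfolding bessel_law_def by (elim conjE allE[where x = "[(t, UNIV)]"] impE) auto
  then show ?thesis
    by simp
qed

theorem lemma3p2:
  fixes \<nu> x t :: real and P Q :: "(real \<Rightarrow> real) measure"
  assumes "\<nu> > 0" and "x \<ge> 0" and "t > 0"
    and "bessel_law (- \<nu>) x P" and "bessel_law (- \<nu> - 1) x Q"
  shows "measure P {\<omega> \<in> space P. tau0 \<omega> > ereal t}
       = x powr (2 * \<nu>) / ((2 * t) powr \<nu> * Gamma (\<nu> + 1)) * exp (- (x\<^sup>2) / (2 * t))
         + measure Q {\<omega> \<in> space Q. tau0 \<omega> > ereal t}"
proof -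
  let ?SP = "{\<omega> \<in> space P. tau0 \<omega> > ereal t}" and ?SQ = "{\<omega> \<in> space Q. tau0 \<omega> > ereal t}"
  have SP: "emeasure P ?SP = (\<Sum>k. ennreal (survival_coeff \<nu> t x k))"
    using assms by (simp add: emeasure_tau0_gt_bessel_law nn_integral_bessel_kdens_neg)
  have SQ: "emeasure Q ?SQ = (\<Sum>k. ennreal (survival_coeff (\<nu> + 1) t x k))"
    using emeasure_tau0_gt_bessel_law[OF assms(5,3)] nn_integral_bessel_kdens_neg[of "\<nu> + 1" t x] assms
    by simp
  have "emeasure P ?SP = (\<Sum>k. ennreal (survival_coeff \<nu> t x (k + 1))) + ennreal (survival_coeff \<nu> t x 0)"
    unfolding SP by (subst suminf_offset[OF summableI, of _ 1]) simp
  then have split: "emeasure P ?SP = ennreal (survival_coeff \<nu> t x 0) + emeasure Q ?SQ"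
    unfolding SQ by (simp add: survival_coeff_Suc add.commute)
  have "prob_space Q"
    using assms(5) by (simp add: bessel_law_def)
  then have finite: "emeasure Q ?SQ < \<infinity>"
    by (simp add: prob_space.finite_measure finite_measure.emeasure_finite less_top[symmetric])
  have "measure P ?SP = enn2real (ennreal (survival_coeff \<nu> t x 0) + emeasure Q ?SQ)"
    unfolding measure_def split ..
  also have "\<dots> = survival_coeff \<nu> t x 0 + measure Q ?SQ"
    using finite survival_coeff_nonneg[OF assms(1)] by (simp add: enn2real_plus measure_def)
  finally show ?thesis
    by (simp add: survival_coeff_def)
qed

end
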